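(* Let $u$ and $v$ be vertices of $T$ such that $v$ is not a vertex of $T^u$. Let $X$ be the set of vertices in $C_{T^u}$ that are ancestors of $v$. Suppose $X\neq\emptyset$ and let $x$ be the last vertex on the path in $T$ from $u$ to $v$ that is contained in $T^u$. Then $x\in X$, and $x$ is the deepest vertex of $X$.
   Context: Let $T$ be a rooted tree on $n$ vertices with positive edge weights. Ancestor/descendant refer to $T$, and a vertex counts as its own ancestor and descendant. $T_v$ denotes the subtree of $T$ rooted at $v$. For every non-leaf vertex $v$ of $T$ fix a child $c_1(v)$ with $|T_{c_1(v)}|$ maximal among the children of $v$; the edges $(v,c_1(v))$ are called leftmost. A subtree $R$ of $T$ (connected subgraph) is rooted at its vertex closest to the root of $T$, denoted $rt(R)$, and inherits the leftmost labelling; $R_v$ is the subtree of $R$ rooted at $v$. For $v\in V(R)$, $P_R(v)$ is the longest downward path from $v$ in $R$ using only leftmost edges; its last vertex is $l(v)$, and $l(R):=l(rt(R))$. For an integer $d$, a vertex $v$ of $R$ is $d$-balanced (in $R$) if $|R_{c_1(v)}|\le |R|-d$ (where $|R_{c_1(v)}|=0$ if $c_1(v)$ is undefined or not in $R$). $b_d(v)$ is the first $d$-balanced vertex on $P_R(v)$, or NULL if none. Define $CV(R,d)=\emptyset$ if $b_d(rt(R))$ is NULL, and otherwise, with $b=b_d(rt(R))$, $CV(R,d)=\{b\}\cup\bigcup_{w}CV(R_w,d)$, the union over the children $w$ of $b$ in $R$. Fix an integer $k\ge 4$. For a subtree $R$ with $m$ vertices, $C_R:=V(R)$ if $k\ge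 m/2-1$, and otherwise $C_R:=CV(R,m/k)\cup\{l(R),rt(R)\}$. Canonical subtrees: $T$ is canonical; if $R$ is canonical, every connected component of the forest obtained from $R$ by deleting the vertices of $C_R$ (and incident edges) is canonical. Every vertex $v$ of $T$ belongs to $C_R$ for exactly one canonical subtree $R$, denoted $T^v$. *)

theory Defs
  imports Complex_Main
begin

definition is_rtree :: "'a set \<Rightarrow> 'a \<Rightarrow> ('a \<Rightarrow> 'a) \<Rightarrow> bool" where
  "is_rtree V r par \<longleftrightarrow> finite V \<and> r \<in> V \<and> par r = r \<and>
     (\<forall>v\<in>V. par v \<in> V \<and> (\<exists>i. (par ^^ i) v = r))"

definition anc :: "('a \<Rightarrow> 'a) \<Rightarrow> 'a \<Rightarrow> 'a \<Rightarrow> bool" where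
  "anc par a v \<longleftrightarrow> (\<exists>i. (par ^^ i) v = a)"

definition children :: "'a set \<Rightarrow> 'a \<Rightarrow> ('a \<Rightarrow> 'a) \<Rightarrow> 'a \<Rightarrow> 'a set" where
  "children V r par v = {w \<in> V. w \<noteq> r \<and> par w = v}"

definition Tsub :: "'a set \<Rightarrow> ('a \<Rightarrow> 'a) \<Rightarrow> 'a \<Rightarrow> 'a set" where
  "Tsub V par w = {y \<in> V. anc par w y}"

definition leftmost_choice :: "'a set \<Rightarrow> 'a \<Rightarrow> ('a \<Rightarrow> 'a) \<Rightarrow> ('a \<Rightarrow> 'a) \<Rightarrow> bool" where
  "leftmost_choice V r par c1 \<longleftrightarrow>
     (\<forall>v\<in>V. children V r par v \<noteq> {} \<longrightarrow>
        c1 v \<in> children V r par v \<and>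
        (\<forall>w\<in>children V r par v. card (Tsub V par w) \<le> card (Tsub V par (c1 v))))"

text \<open>Subtrees (connected subgraphs) of T, identified with their vertex sets.\<close>
definition is_subtree :: "'a set \<Rightarrow> ('a \<Rightarrow> 'a) \<Rightarrow> 'a set \<Rightarrow> bool" where
  "is_subtree V par S \<longleftrightarrow> S \<subseteq> V \<and> S \<noteq> {} \<and>
     (\<exists>t\<in>S. \<forall>w\<in>S. anc par t w \<and> (\<forall>y. anc par y w \<and> anc par t y \<longrightarrow> y \<in> S))"

definition rt :: "('a \<Rightarrow> 'a) \<Rightarrow> 'a set \<Rightarrow> 'a" where
  "rt par R = (THE t. t \<in> R \<and> (\<forall>w\<in>R. anc par t w))"

definition subR :: "('a \<Rightarrow> 'a) \<Rightarrow> 'a set \<Rightarrow> 'a \<Rightarrow> 'a set" where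
  "subR par R v = {w \<in> R. anc par v w}"

text \<open>|R_{c1(v)}|, which is 0 if c1(v) is undefined (v a leaf of T) or not in R.\<close>
definition c1size :: "'a set \<Rightarrow> 'a \<Rightarrow> ('a \<Rightarrow> 'a) \<Rightarrow> ('a \<Rightarrow> 'a) \<Rightarrow> 'a set \<Rightarrow> 'a \<Rightarrow> nat" where
  "c1size V r par c1 R v =
     (if children V r par v \<noteq> {} \<and> c1 v \<in> R then card (subR par R (c1 v)) else 0)"

definition balanced :: "'a set \<Rightarrow> 'a \<Rightarrow> ('a \<Rightarrow> 'a) \<Rightarrow> ('a \<Rightarrow> 'a) \<Rightarrow> 'a set \<Rightarrow> real \<Rightarrow> 'a \<Rightarrow> bool" where
  "balanced V r par c1 R d v \<longleftrightarrow> real (c1size V r par c1 R v) \<le> real (card R) - d"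

text \<open>The i-th vertex (c1^^i) v lies on P_R(v).\<close>
definition lp_ok :: "'a set \<Rightarrow> 'a \<Rightarrow> ('a \<Rightarrow> 'a) \<Rightarrow> ('a \<Rightarrow> 'a) \<Rightarrow> 'a set \<Rightarrow> 'a \<Rightarrow> nat \<Rightarrow> bool" where
  "lp_ok V r par c1 R v i \<longleftrightarrow>
     (\<forall>j<i. children V r par ((c1 ^^ j) v) \<noteq> {} \<and> (c1 ^^ Suc j) v \<in> R)"

definition lastl :: "'a set \<Rightarrow> 'a \<Rightarrow> ('a \<Rightarrow> 'a) \<Rightarrow> ('a \<Rightarrow> 'a) \<Rightarrow> 'a set \<Rightarrow> 'a \<Rightarrow> 'a" where
  "lastl V r par c1 R v = (c1 ^^ (GREATEST i. lp_ok V r par c1 R v i)) v"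

definition bd :: "'a set \<Rightarrow> 'a \<Rightarrow> ('a \<Rightarrow> 'a) \<Rightarrow> ('a \<Rightarrow> 'a) \<Rightarrow> 'a set \<Rightarrow> real \<Rightarrow> 'a \<Rightarrow> 'a option" where
  "bd V r par c1 R d v =
     (if \<exists>i. lp_ok V r par c1 R v i \<and> balanced V r par c1 R d ((c1 ^^ i) v)
      then Some ((c1 ^^ (LEAST i. lp_ok V r par c1 R v i \<and> balanced V r par c1 R d ((c1 ^^ i) v))) v)
      else None)"

text \<open>Membership in CV(R,d) (least solution of the recursive definition).\<close>
inductive CVm :: "'a set \<Rightarrow> 'a \<Rightarrow> ('a \<Rightarrow> 'a) \<Rightarrow> ('a \<Rightarrow> 'a) \<Rightarrow> 'a set \<Rightarrow> real \<Rightarrow> 'a \<Rightarrow> bool"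
  for V r par c1 where
  here: "bd V r par c1 R d (rt par R) = Some b \<Longrightarrow> CVm V r par c1 R d b"
| below: "bd V r par c1 R d (rt par R) = Some b \<Longrightarrow> w \<in> children V r par b \<Longrightarrow> w \<in> R \<Longrightarrow>
          CVm V r par c1 (subR par R w) d x \<Longrightarrow> CVm V r par c1 R d x"

definition CV :: "'a set \<Rightarrow> 'a \<Rightarrow> ('a \<Rightarrow> 'a) \<Rightarrow> ('a \<Rightarrow> 'a) \<Rightarrow> 'a set \<Rightarrow> real \<Rightarrow> 'a set" where
  "CV V r par c1 R d = {x. CVm V r par c1 R d x}"

definition CR :: "'a set \<Rightarrow> 'a \<Rightarrow> ('a \<Rightarrow> 'a) \<Rightarrow> ('a \<Rightarrow> 'a) \<Rightarrow> nat \<Rightarrow> 'a set \<Rightarrow> 'a set" where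
  "CR V r par c1 k R =
     (if real k \<ge> real (card R) / 2 - 1 then R
      else CV V r par c1 R (real (card R) / real k)
           \<union> {lastl V r par c1 R (rt par R), rt par R})"

definition component :: "'a set \<Rightarrow> ('a \<Rightarrow> 'a) \<Rightarrow> 'a set \<Rightarrow> 'a set \<Rightarrow> bool" where
  "component V par A S \<longleftrightarrow> is_subtree V par S \<and> S \<subseteq> A \<and>
     (\<forall>S'. is_subtree V par S' \<and> S \<subseteq> S' \<and> S' \<subseteq> A \<longrightarrow> S' = S)"

inductive canonical :: "'a set \<Rightarrow> 'a \<Rightarrow> ('a \<Rightarrow> 'a) \<Rightarrow> ('a \<Rightarrow> 'a) \<Rightarrow> nat \<Rightarrow> 'a set \<Rightarrow> bool"
  for V r par c1 k where
  top: "canonical V r par c1 k V"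
| step: "canonical V r par c1 k R \<Longrightarrow> component V par (R - CR V r par c1 k R) S \<Longrightarrow>
         canonical V r par c1 k S"

definition Tcan :: "'a set \<Rightarrow> 'a \<Rightarrow> ('a \<Rightarrow> 'a) \<Rightarrow> ('a \<Rightarrow> 'a) \<Rightarrow> nat \<Rightarrow> 'a \<Rightarrow> 'a set" where
  "Tcan V r par c1 k u = (THE R. canonical V r par c1 k R \<and> u \<in> CR V r par c1 k R)"

definition depth :: "'a \<Rightarrow> ('a \<Rightarrow> 'a) \<Rightarrow> 'a \<Rightarrow> nat" where
  "depth r par w = (LEAST i. (par ^^ i) w = r)"

definition lca :: "('a \<Rightarrow> 'a) \<Rightarrow> 'a \<Rightarrow> 'a \<Rightarrow> 'a" where
  "lca par u v = (THE c. anc par c u \<and> anc par c v \<and> (\<forall>c'. anc par c' u \<and> anc par c' v \<longrightarrow> anc par c' c))"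

definition upl :: "'a \<Rightarrow> ('a \<Rightarrow> 'a) \<Rightarrow> 'a \<Rightarrow> 'a \<Rightarrow> 'a list" where
  "upl r par u a = map (\<lambda>i. (par ^^ i) u) [0..<Suc (depth r par u - depth r par a)]"

definition tpath :: "'a \<Rightarrow> ('a \<Rightarrow> 'a) \<Rightarrow> 'a \<Rightarrow> 'a \<Rightarrow> 'a list" where
  "tpath r par u v = (let c = lca par u v in upl r par u c @ tl (rev (upl r par v c)))"

end

theory Submission
  imports Defs
begin

text \<open>The key fact is that a canonical subtree \<open>R\<close> can only be left downwards at \<open>l(R)\<close>:
  if \<open>x \<in> R\<close> has a child \<open>w \<notin> R\<close>, then \<open>x = l(R)\<close>. This is inherited by every component \<open>S\<close>
  of \<open>R - C\<^sub>R\<close>: a child \<open>w \<notin> S\<close> of \<open>x \<in> S\<close> cannot lie outside \<open>R\<close> (else \<open>x = l(R) \<in> C\<^sub>R\<close>) nor in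
  \<open>R - C\<^sub>R\<close> (maximality of \<open>S\<close>), so \<open>w \<in> C\<^sub>R\<close>. By the recursive construction of \<open>C\<^sub>R\<close>, \<open>w\<close> then
  continues a leftmost path that starts at \<open>rt(R)\<close> or just below a vertex of \<open>C\<^sub>R\<close>; such a path
  enters \<open>S\<close> at \<open>rt(S)\<close>, so \<open>x\<close> is the last vertex of \<open>P\<^sub>S(rt(S))\<close>.

  Since canonical subtrees are pairwise disjoint or nested in each other's \<open>R - C\<^sub>R\<close>, \<open>T\<^sup>u\<close> is
  well defined. The deepest ancestor \<open>x\<close> of \<open>v\<close> in \<open>T\<^sup>u\<close> has its child towards \<open>v\<close> outside
  \<open>T\<^sup>u\<close>, so \<open>x = l(T\<^sup>u) \<in> C\<^bsub>T\<^sup>u\<^esub>\<close>; and the path from \<open>u\<close> to \<open>v\<close> climbs inside \<open>T\<^sup>u\<close> to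
  \<open>lca(u,v)\<close> and then descends along the ancestors of \<open>v\<close>, leaving \<open>T\<^sup>u\<close> for good after \<open>x\<close>.\<close>

section \<open>Rooted trees\<close>

locale rooted_tree =
  fixes V :: "'a set" and r :: 'a and par :: "'a \<Rightarrow> 'a"
  assumes is_rtree: "is_rtree V r par"
begin

lemma finite_V: "finite V"
  and root_in_V: "r \<in> V"
  and par_root: "par r = r"
  and par_in_V: "v \<in> V \<Longrightarrow> par v \<in> V"
  and reaches_root: "v \<in> V \<Longrightarrow> \<exists>i. (par ^^ i) v = r"
  using is_rtree unfolding is_rtree_def by auto

lemma funpow_par_in_V: "v \<in> V \<Longrightarrow> (par ^^ i) v \<in> V"
  by (induction i) (auto simp: par_in_V)

lemma funpow_par_root: "(par ^^ i) r = r"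
  by (induction i) (auto simp: par_root)

lemma funpow_par_Suc: "(par ^^ Suc i) v = (par ^^ i) (par v)"
  by (simp only: funpow_Suc_right comp_def)

lemma funpow_depth: "v \<in> V \<Longrightarrow> (par ^^ depth r par v) v = r"
  unfolding depth_def using reaches_root by (rule LeastI_ex)

lemma depth_root: "depth r par r = 0"
  unfolding depth_def by simp

lemma depth_eq_0D: "v \<in> V \<Longrightarrow> depth r par v = 0 \<Longrightarrow> v = r"
  using funpow_depth by fastforce

lemma depth_par:
  assumes "v \<in> V" "v \<noteq> r"
  shows "depth r par v = Suc (depth r par (par v))"
proof -
  let ?n = "depth r par v"
  have n: "(par ^^ ?n) v = r" using funpow_depth assms(1) .
  with assms(2) have n0: "?n \<noteq> 0" by (cases ?n) auto
  with n have "(par ^^ (?n - 1)) (par v) = r" by (metis Suc_pred' funpow_par_Suc gr0I)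
  then have "depth r par (par v) \<le> ?n - 1" unfolding depth_def by (rule Least_le)
  moreover have "(par ^^ Suc (depth r par (par v))) v = r"
    using funpow_depth[OF par_in_V[OF assms(1)]] funpow_par_Suc by simp
  then have "?n \<le> Suc (depth r par (par v))" unfolding depth_def by (rule Least_le)
  ultimately show ?thesis using n0 by linarith
qed

lemma depth_funpow_par: "v \<in> V \<Longrightarrow> depth r par ((par ^^ i) v) = depth r par v - i"
proof (induction i arbitrary: v)
  case (Suc i)
  show ?case
  proof (cases "v = r")
    case True
    then show ?thesis using funpow_par_root depth_root par_root by simp
  next
    case False
    then show ?thesis
      using Suc.IH[OF par_in_V[OF Suc.prems]] depth_par[OF Suc.prems] funpow_par_Suc by simp
  qed
qed simp

lemma anc_refl: "anc par a a"
  unfolding anc_def by (metis funpow_0)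

lemma anc_trans: "anc par a b \<Longrightarrow> anc par b c \<Longrightarrow> anc par a c"
  unfolding anc_def by (metis funpow_add comp_apply)

lemma anc_par: "anc par (par w) w"
  unfolding anc_def by (rule exI[of _ 1]) simp

lemma anc_in_V: "anc par a v \<Longrightarrow> v \<in> V \<Longrightarrow> a \<in> V"
  unfolding anc_def using funpow_par_in_V by blast

lemma root_anc: "v \<in> V \<Longrightarrow> anc par r v"
  unfolding anc_def using reaches_root by blast

lemma anc_depth_le: "anc par a v \<Longrightarrow> v \<in> V \<Longrightarrow> depth r par a \<le> depth r par v"
  unfolding anc_def using depth_funpow_par by fastforce

lemma anc_antisym:
  assumes "anc par a b" "anc par b a" "b \<in> V"
  shows "a = b"
proof -
  obtain i where i: "(par ^^ i) b = a" using assms(1) unfolding anc_def by blast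
  show ?thesis
  proof (cases i)
    case (Suc i')
    have "depth r par a \<le> depth r par b - i"
      using depth_funpow_par[OF assms(3), of i] i by simp
    moreover have "depth r par b \<le> depth r par a"
      using anc_depth_le[OF assms(2) anc_in_V[OF assms(1,3)]] .
    ultimately have "b = r" using Suc depth_eq_0D[OF assms(3)] by linarith
    then show ?thesis using i funpow_par_root by simp
  qed (use i in simp)
qed

lemma anc_linear: "anc par a v \<Longrightarrow> anc par b v \<Longrightarrow> anc par a b \<or> anc par b a"
  unfolding anc_def
proof (elim exE)
  fix i j assume i: "(par ^^ i) v = a" and j: "(par ^^ j) v = b"
  show "(\<exists>i. (par ^^ i) b = a) \<or> (\<exists>i. (par ^^ i) a = b)"
  proof (cases "i \<le> j")
    case True
    then have "(par ^^ (j - i)) a = b" using i j funpow_add[of "j - i" i par] by simp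
    then show ?thesis by blast
  next
    case False
    then have "(par ^^ (i - j)) b = a" using i j funpow_add[of "i - j" j par] by simp
    then show ?thesis by blast
  qed
qed

lemma anc_cases: "anc par y w \<Longrightarrow> y = w \<or> anc par y (par w)"
  unfolding anc_def by (metis funpow_par_Suc not0_implies_Suc funpow_0)

lemma funpow_depth_diff:
  assumes "anc par a v" "v \<in> V"
  shows "(par ^^ (depth r par v - depth r par a)) v = a"
proof -
  obtain i where i: "(par ^^ i) v = a" using assms(1) unfolding anc_def by blast
  show ?thesis
  proof (cases "i \<le> depth r par v")
    case True
    then show ?thesis using i depth_funpow_par[OF assms(2), of i] by simp
  next
    case False
    then have "(par ^^ i) v = r"
      using funpow_depth[OF assms(2)] funpow_par_root funpow_add[of "i - depth r par v" "depth r par v" par]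
      by (metis comp_apply le_add_diff_inverse2 nat_le_linear)
    then show ?thesis using i funpow_depth[OF assms(2)] depth_root by simp
  qed
qed

lemma childrenD: "w \<in> children V r par x \<Longrightarrow> w \<in> V \<and> w \<noteq> r \<and> par w = x"
  unfolding children_def by auto

lemma child_not_anc:
  assumes "w \<in> children V r par x"
  shows "\<not> anc par w x"
proof
  assume "anc par w x"
  moreover have w: "w \<in> V" "w \<noteq> r" "par w = x" using childrenD[OF assms] by auto
  ultimately have "w = x" using anc_antisym anc_par par_in_V by metis
  then show False using depth_par[OF w(1,2)] w(3) by simp
qed

section \<open>Subtrees and components\<close>

lemma rt_eqI:
  assumes "S \<subseteq> V" "t \<in> S" "\<forall>w\<in>S. anc par t w"
  shows "rt par S = t"
  unfolding rt_def
proof (rule the_equality)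
  show "t \<in> S \<and> (\<forall>w\<in>S. anc par t w)" using assms by blast
  fix t' assume "t' \<in> S \<and> (\<forall>w\<in>S. anc par t' w)"
  then show "t' = t" using assms anc_antisym by blast
qed

lemma subtree_subset_V: "is_subtree V par S \<Longrightarrow> S \<subseteq> V"
  unfolding is_subtree_def by blast

lemma subtree_rootE:
  assumes "is_subtree V par S"
  obtains "rt par S \<in> S" "\<And>w. w \<in> S \<Longrightarrow> anc par (rt par S) w"
    "\<And>w y. w \<in> S \<Longrightarrow> anc par y w \<Longrightarrow> anc par (rt par S) y \<Longrightarrow> y \<in> S"
proof -
  obtain t where t: "t \<in> S" "\<forall>w\<in>S. anc par t w \<and> (\<forall>y. anc par y w \<and> anc par t y \<longrightarrow> y \<in> S)"
    using assms unfolding is_subtree_def by blast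
  then have "rt par S = t" using rt_eqI subtree_subset_V[OF assms] by blast
  with t that show ?thesis by blast
qed

lemma rt_in_subtree: "is_subtree V par S \<Longrightarrow> rt par S \<in> S"
  by (erule subtree_rootE)

lemma rt_anc: "is_subtree V par S \<Longrightarrow> w \<in> S \<Longrightarrow> anc par (rt par S) w"
  by (erule subtree_rootE) blast

lemma subtree_convex:
  assumes "is_subtree V par S" "a \<in> S" "w \<in> S" "anc par a y" "anc par y w"
  shows "y \<in> S"
  using assms(1)
proof (rule subtree_rootE)
  assume "\<And>w. w \<in> S \<Longrightarrow> anc par (rt par S) w"
    and "\<And>w y. w \<in> S \<Longrightarrow> anc par y w \<Longrightarrow> anc par (rt par S) y \<Longrightarrow> y \<in> S"
  with assms(2-) show "y \<in> S" using anc_trans by blast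
qed

lemma subtree_V: "is_subtree V par V"
  unfolding is_subtree_def using root_in_V root_anc anc_in_V by blast

lemma subtree_singleton: "u \<in> V \<Longrightarrow> is_subtree V par {u}"
  unfolding is_subtree_def using anc_refl anc_antisym by blast

lemma subtree_subR:
  assumes "is_subtree V par R" "w \<in> R"
  shows "is_subtree V par (subR par R w)"
  unfolding is_subtree_def subR_def
  using assms subtree_subset_V[OF assms(1)] subtree_convex[OF assms(1,2)] anc_refl anc_trans
  by blast

lemma rt_subR: "R \<subseteq> V \<Longrightarrow> w \<in> R \<Longrightarrow> rt par (subR par R w) = w"
  by (rule rt_eqI) (auto simp: subR_def anc_refl)

lemma subtree_insert_child:
  assumes S: "is_subtree V par S" and "x \<in> S" "w \<in> children V r par x"
  shows "is_subtree V par (insert w S)"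
proof -
  let ?t = "rt par S"
  have w: "w \<in> V" "par w = x" using childrenD[OF assms(3)] by auto
  have "anc par ?t w" using rt_anc[OF S assms(2)] anc_par[of w] w(2) anc_trans by metis
  moreover have "y \<in> insert w S" if "anc par y w" "anc par ?t y" for y
    using anc_cases[OF that(1)] w(2) subtree_convex[OF S rt_in_subtree[OF S] assms(2) that(2)] by blast
  ultimately have "\<forall>z\<in>insert w S. anc par ?t z \<and> (\<forall>y. anc par y z \<and> anc par ?t y \<longrightarrow> y \<in> insert w S)"
    using rt_anc[OF S] subtree_convex[OF S rt_in_subtree[OF S]] by blast
  then show ?thesis
    unfolding is_subtree_def using rt_in_subtree[OF S] subtree_subset_V[OF S] w(1) by blast
qed

lemma subtree_Un:
  assumes S1: "is_subtree V par S1" and S2: "is_subtree V par S2" and "z \<in> S1" "z \<in> S2"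
  shows "is_subtree V par (S1 \<union> S2)"
proof -
  have S: "is_subtree V par S" "z \<in> S" if "S \<in> {S1, S2}" for S
    using assms that by auto
  have "anc par (rt par S1) (rt par S2) \<or> anc par (rt par S2) (rt par S1)"
    using anc_linear[OF rt_anc[OF S1 assms(3)] rt_anc[OF S2 assms(4)]] .
  then obtain T where T: "T \<in> {S1, S2}" "\<And>S. S \<in> {S1, S2} \<Longrightarrow> anc par (rt par T) (rt par S)"
    using anc_refl by blast
  let ?t = "rt par T"
  have above_z: "y \<in> S1 \<union> S2" if "anc par ?t y" "anc par y z" for y
    using subtree_convex[OF S(1)[OF T(1)] rt_in_subtree[OF S(1)[OF T(1)]] S(2)[OF T(1)] that] T(1)
    by blast
  have "anc par ?t w \<and> (\<forall>y. anc par y w \<and> anc par ?t y \<longrightarrow> y \<in> S1 \<union> S2)"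
    if "S \<in> {S1, S2}" "w \<in> S" for S w
  proof -
    note S = S[OF that(1)]
    have Sw: "anc par (rt par S) w" using rt_anc[OF S(1) that(2)] .
    moreover have "y \<in> S1 \<union> S2" if y: "anc par y w" "anc par ?t y" for y
    proof (cases "anc par (rt par S) y")
      case True
      have "y \<in> S" using subtree_convex[OF S(1) rt_in_subtree[OF S(1)] \<open>w \<in> S\<close> True y(1)] .
      then show ?thesis using \<open>S \<in> {S1, S2}\<close> by blast
    next
      case False
      then have "anc par y (rt par S)" using anc_linear[OF y(1) Sw] by blast
      then have "anc par y z" using anc_trans rt_anc[OF S] by blast
      then show ?thesis using above_z[OF y(2)] by blast
    qed
    ultimately show ?thesis using T(2)[OF that(1)] anc_trans by blast
  qed
  then have "\<forall>w\<in>S1 \<union> S2. anc par ?t w \<and> (\<forall>y. anc par y w \<and> anc par ?t y \<longrightarrow> y \<in> S1 \<union> S2)"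
    by blast
  moreover have "?t \<in> S1 \<union> S2" using rt_in_subtree[OF S(1)[OF T(1)]] T(1) by blast
  ultimately show ?thesis
    unfolding is_subtree_def using subtree_subset_V[OF S1] subtree_subset_V[OF S2] by blast
qed

lemma component_subtree: "component V par A S \<Longrightarrow> is_subtree V par S"
  and component_subset: "component V par A S \<Longrightarrow> S \<subseteq> A"
  and component_maximal: "component V par A S \<Longrightarrow> is_subtree V par S' \<Longrightarrow> S \<subseteq> S' \<Longrightarrow> S' \<subseteq> A \<Longrightarrow> S' = S"
  unfolding component_def by blast+

lemma component_unique:
  assumes "component V par A S1" "component V par A S2" "z \<in> S1" "z \<in> S2"
  shows "S1 = S2"
proof -
  have "is_subtree V par (S1 \<union> S2)"
    using subtree_Un[OF component_subtree[OF assms(1)] component_subtree[OF assms(2)] assms(3,4)] .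
  moreover have "S1 \<union> S2 \<subseteq> A" using component_subset assms(1,2) by blast
  ultimately have "S1 \<union> S2 = S1" "S1 \<union> S2 = S2"
    using component_maximal[OF assms(1)] component_maximal[OF assms(2)] by auto
  then show ?thesis by simp
qed

lemma component_exists:
  assumes "u \<in> A" "A \<subseteq> V"
  obtains S where "component V par A S" "u \<in> S"
proof -
  let ?P = "\<lambda>S. is_subtree V par S \<and> u \<in> S \<and> S \<subseteq> A"
  have "?P {u}" using subtree_singleton assms by auto
  moreover have "\<forall>S. ?P S \<longrightarrow> card S < Suc (card V)"
  proof (intro allI impI)
    fix S assume "?P S"
    then have "S \<subseteq> V" using assms(2) by blast
    from card_mono[OF finite_V this] show "card S < Suc (card V)" by linarith
  qed
  ultimately obtain S where S: "?P S" "\<forall>S'. ?P S' \<longrightarrow> card S' \<le> card S"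
    using ex_has_greatest_nat[of ?P "{u}" card "Suc (card V)"] by blast
  have "S' = S" if S': "is_subtree V par S'" "S \<subseteq> S'" "S' \<subseteq> A" for S'
  proof -
    have fin: "finite S'" using finite_subset[OF subset_trans[OF S'(3) assms(2)] finite_V] .
    have "card S' \<le> card S" using S(1) S(2) S' by blast
    then have "card S = card S'" using card_mono[OF fin S'(2)] by linarith
    from card_subset_eq[OF fin S'(2) this] show ?thesis by simp
  qed
  then have "component V par A S" unfolding component_def using S(1) by blast
  with S(1) that show ?thesis by blast
qed

end

section \<open>Paths\<close>

lemma last_filter_append_rev_map:
  assumes "j < n" "P (f j)"
  shows "last (filter P (xs @ rev (map f [0..<n]))) = f (LEAST j. P (f j))"
proof -
  let ?j = "LEAST j. P (f j)"
  have "?j < n" using Least_le[of "\<lambda>j. P (f j)", OF assms(2)] assms(1) by linarith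
  then have "[0..<n] = [0..<?j] @ ?j # [Suc ?j..<n]"
    using upt_add_eq_append[of 0 ?j "n - ?j"] upt_conv_Cons[of ?j n] by simp
  moreover have "filter P (rev (map f [0..<?j])) = []"
  proof (intro filter_False ballI)
    fix x assume "x \<in> set (rev (map f [0..<?j]))"
    then obtain i where "i < ?j" "x = f i" by auto
    then show "\<not> P x" using not_less_Least[of i "\<lambda>j. P (f j)"] by simp
  qed
  moreover have "P (f ?j)" using assms(2) by (rule LeastI)
  ultimately show ?thesis by simp
qed

definition lowest_anc_in :: "('a \<Rightarrow> 'a) \<Rightarrow> 'a set \<Rightarrow> 'a \<Rightarrow> 'a" where
  "lowest_anc_in par R v = (par ^^ (LEAST j. (par ^^ j) v \<in> R)) v"

context rooted_tree
begin

lemma lca_greatest: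
  assumes "u \<in> V" "v \<in> V"
  shows "anc par (lca par u v) u \<and> anc par (lca par u v) v \<and>
    (\<forall>c. anc par c u \<and> anc par c v \<longrightarrow> anc par c (lca par u v))"
proof -
  let ?Q = "\<lambda>i. anc par ((par ^^ i) u) v"
  define l where "l = (LEAST i. ?Q i)"
  define c where "c = (par ^^ l) u"
  have "?Q (depth r par u)" using funpow_depth[OF assms(1)] root_anc[OF assms(2)] by simp
  then have cv: "anc par c v" unfolding c_def l_def by (rule LeastI)
  have cu: "anc par c u" unfolding c_def anc_def by blast
  have greatest: "anc par c' c" if c': "anc par c' u" "anc par c' v" for c'
  proof -
    obtain a where a: "(par ^^ a) u = c'" using c'(1) unfolding anc_def by blast
    have "l \<le> a" unfolding l_def by (rule Least_le) (simp add: a c'(2))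
    have "(par ^^ (a - l)) c = (par ^^ (a - l + l)) u" unfolding c_def funpow_add by simp
    also have "\<dots> = c'" using a \<open>l \<le> a\<close> by simp
    finally show ?thesis unfolding anc_def by blast
  qed
  have "c \<in> V" using anc_in_V[OF cu assms(1)] .
  have "lca par u v = c" unfolding lca_def
  proof (rule the_equality)
    fix c' assume "anc par c' u \<and> anc par c' v \<and> (\<forall>c''. anc par c'' u \<and> anc par c'' v \<longrightarrow> anc par c'' c')"
    then show "c' = c" using anc_antisym[OF greatest _ \<open>c \<in> V\<close>] cu cv by blast
  qed (use cu cv greatest in blast)
  then show ?thesis using cu cv greatest by simp
qed

lemma anc_lowest_anc_in: "anc par (lowest_anc_in par R v) v"
  unfolding lowest_anc_in_def anc_def by blast

lemma lowest_anc_in_mem: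
  assumes "y \<in> R" "anc par y v"
  shows "lowest_anc_in par R v \<in> R"
proof -
  obtain j where "(par ^^ j) v \<in> R" using assms unfolding anc_def by blast
  then show ?thesis unfolding lowest_anc_in_def by (rule LeastI)
qed

lemma anc_lowest_anc_inI:
  assumes "y \<in> R" "anc par y v"
  shows "anc par y (lowest_anc_in par R v)"
proof -
  obtain j where j: "(par ^^ j) v = y" using assms(2) unfolding anc_def by blast
  define l where "l = (LEAST j. (par ^^ j) v \<in> R)"
  have "l \<le> j" unfolding l_def by (rule Least_le) (simp add: j assms(1))
  have "(par ^^ (j - l)) ((par ^^ l) v) = (par ^^ (j - l + l)) v" by (simp add: funpow_add)
  also have "\<dots> = y" using j \<open>l \<le> j\<close> by simp
  finally show ?thesis unfolding lowest_anc_in_def anc_def l_def[symmetric] by blast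
qed

lemma lowest_anc_in_exit:
  assumes "v \<in> V" "v \<notin> R" "y \<in> R" "anc par y v"
  obtains w where "w \<in> children V r par (lowest_anc_in par R v)" "w \<notin> R"
proof -
  define l where "l = (LEAST j. (par ^^ j) v \<in> R)"
  have "(par ^^ l) v \<in> R" using lowest_anc_in_mem[OF assms(3,4)] unfolding lowest_anc_in_def l_def .
  then obtain i where i: "l = Suc i" using assms(2) by (cases l) auto
  let ?w = "(par ^^ i) v"
  have "?w \<notin> R" using not_less_Least[of i "\<lambda>j. (par ^^ j) v \<in> R"] i unfolding l_def by simp
  moreover have par_w: "par ?w = lowest_anc_in par R v"
    unfolding lowest_anc_in_def l_def[symmetric] i by simp
  moreover have "?w \<noteq> r"
    using \<open>?w \<notin> R\<close> \<open>(par ^^ l) v \<in> R\<close> par_w par_root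
    unfolding lowest_anc_in_def l_def[symmetric] by auto
  ultimately show ?thesis
    using that funpow_par_in_V[OF assms(1)] unfolding children_def by blast
qed

lemma last_filter_tpath:
  assumes R: "is_subtree V par R" and "u \<in> R" "v \<in> V" "y \<in> R" "anc par y v"
  shows "last (filter (\<lambda>w. w \<in> R) (tpath r par u v)) = lowest_anc_in par R v"
proof -
  have uV: "u \<in> V" using assms(2) subtree_subset_V[OF R] by blast
  define c where "c = lca par u v"
  have cu: "anc par c u" and cv: "anc par c v"
    using lca_greatest[OF uV assms(3)] unfolding c_def by blast+
  have "anc par (rt par R) v" using anc_trans[OF rt_anc[OF R assms(4)] assms(5)] .
  then have "anc par (rt par R) c"
    using lca_greatest[OF uV assms(3)] rt_anc[OF R assms(2)] unfolding c_def by blast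
  then have "c \<in> R" using subtree_convex[OF R rt_in_subtree[OF R] assms(2) _ cu] by blast
  define m where "m = depth r par v - depth r par c"
  define f where "f = (\<lambda>i. (par ^^ i) v)"
  have fm: "f m = c" unfolding f_def m_def using funpow_depth_diff[OF cv assms(3)] .
  define xs where "xs = upl r par u c"
  have "xs \<noteq> []" and "last xs = c"
    unfolding xs_def upl_def using funpow_depth_diff[OF cu uV] by simp_all
  then obtain ys where ys: "xs = ys @ [c]" by (metis append_butlast_last_id)
  have "tpath r par u v = xs @ rev (map f [0..<m])"
    unfolding tpath_def Let_def xs_def c_def[symmetric] upl_def f_def m_def by simp
  also have "\<dots> = ys @ rev (map f [0..<Suc m])" using ys fm by simp
  finally show ?thesis
    using last_filter_append_rev_map[of m "Suc m" "\<lambda>w. w \<in> R" f] fm \<open>c \<in> R\<close>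
    unfolding lowest_anc_in_def f_def by simp
qed

end

section \<open>Leftmost paths\<close>

locale leftmost_tree = rooted_tree +
  fixes c1 :: "'a \<Rightarrow> 'a"
  assumes leftmost: "leftmost_choice V r par c1"
begin

lemma lp_ok_mono: "lp_ok V r par c1 R s i \<Longrightarrow> j \<le> i \<Longrightarrow> lp_ok V r par c1 R s j"
  unfolding lp_ok_def by auto

lemma lp_ok_subset: "lp_ok V r par c1 R s i \<Longrightarrow> R \<subseteq> R' \<Longrightarrow> lp_ok V r par c1 R' s i"
  unfolding lp_ok_def by auto

lemma lp_ok_Suc:
  "lp_ok V r par c1 R s (Suc i) \<longleftrightarrow>
     lp_ok V r par c1 R s i \<and> children V r par ((c1 ^^ i) s) \<noteq> {} \<and> (c1 ^^ Suc i) s \<in> R"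
  unfolding lp_ok_def using less_Suc_eq by auto

lemma funpow_c1_child:
  assumes "lp_ok V r par c1 R s (Suc i)" "s \<in> V"
  shows "(c1 ^^ Suc i) s \<in> children V r par ((c1 ^^ i) s)"
  using assms
proof (induction i arbitrary: R)
  case 0
  then show ?case using leftmost unfolding leftmost_choice_def lp_ok_Suc by simp
next
  case (Suc i)
  then have "(c1 ^^ Suc i) s \<in> V" using childrenD lp_ok_Suc by blast
  then show ?case using Suc.prems leftmost unfolding leftmost_choice_def lp_ok_Suc by simp
qed

lemma funpow_c1_in_V: "lp_ok V r par c1 R s i \<Longrightarrow> s \<in> V \<Longrightarrow> (c1 ^^ i) s \<in> V"
  by (cases i) (auto dest: funpow_c1_child[THEN childrenD])

lemma par_funpow_c1: "lp_ok V r par c1 R s (Suc i) \<Longrightarrow> s \<in> V \<Longrightarrow> par ((c1 ^^ Suc i) s) = (c1 ^^ i) s"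
  using funpow_c1_child childrenD by blast

lemma funpow_par_funpow_c1:
  "lp_ok V r par c1 R s i \<Longrightarrow> s \<in> V \<Longrightarrow> j \<le> i \<Longrightarrow> (par ^^ j) ((c1 ^^ i) s) = (c1 ^^ (i - j)) s"
proof (induction j arbitrary: i)
  case (Suc j)
  then obtain i' where i: "i = Suc i'" by (cases i) auto
  have "(par ^^ Suc j) ((c1 ^^ i) s) = (par ^^ j) ((c1 ^^ i') s)"
    using par_funpow_c1 Suc.prems i funpow_par_Suc by simp
  also have "\<dots> = (c1 ^^ (i - Suc j)) s"
    using Suc.IH[OF lp_ok_mono[OF Suc.prems(1)]] Suc.prems i by simp
  finally show ?case .
qed simp

lemma anc_funpow_c1:
  assumes "lp_ok V r par c1 R s i" "s \<in> V" "j \<le> i"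
  shows "anc par ((c1 ^^ j) s) ((c1 ^^ i) s)"
  using funpow_par_funpow_c1[OF assms(1,2), of "i - j"] assms(3) unfolding anc_def by auto

lemma depth_funpow_c1:
  "lp_ok V r par c1 R s i \<Longrightarrow> s \<in> V \<Longrightarrow> depth r par ((c1 ^^ i) s) = depth r par s + i"
proof (induction i)
  case (Suc i)
  have "(c1 ^^ Suc i) s \<in> children V r par ((c1 ^^ i) s)" using funpow_c1_child Suc.prems .
  then show ?case using depth_par childrenD Suc lp_ok_mono by (metis add_Suc_right le_SucI order_refl)
qed simp

lemma anc_on_leftmost_path:
  assumes lp: "lp_ok V r par c1 R s i" and "s \<in> V" "anc par s y" "anc par y ((c1 ^^ i) s)"
  obtains j where "j \<le> i" "y = (c1 ^^ j) s"
proof -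
  let ?x = "(c1 ^^ i) s"
  have xV: "?x \<in> V" using funpow_c1_in_V[OF lp assms(2)] .
  let ?a = "depth r par ?x - depth r par y"
  have "depth r par s \<le> depth r par y" using anc_depth_le[OF assms(3) anc_in_V[OF assms(4) xV]] .
  then have "?a \<le> i" using depth_funpow_c1[OF lp assms(2)] by simp
  moreover have "y = (par ^^ ?a) ?x" using funpow_depth_diff[OF assms(4) xV] by simp
  then have "y = (c1 ^^ (i - ?a)) s" using funpow_par_funpow_c1[OF lp assms(2) \<open>?a \<le> i\<close>] by simp
  ultimately show ?thesis using that[of "i - ?a"] by simp
qed

lemma funpow_c1_in: "lp_ok V r par c1 R s i \<Longrightarrow> s \<in> R \<Longrightarrow> (c1 ^^ i) s \<in> R"
  by (cases i) (auto simp: lp_ok_Suc)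

lemma lp_ok_bounded: "lp_ok V r par c1 R s i \<Longrightarrow> s \<in> V \<Longrightarrow> i \<le> Max (depth r par ` V)"
proof -
  assume "lp_ok V r par c1 R s i" "s \<in> V"
  then have "i \<le> depth r par ((c1 ^^ i) s)" and "(c1 ^^ i) s \<in> V"
    using depth_funpow_c1 funpow_c1_in_V by auto
  moreover have "depth r par ((c1 ^^ i) s) \<le> Max (depth r par ` V)"
    using Max_ge[OF finite_imageI[OF finite_V]] \<open>(c1 ^^ i) s \<in> V\<close> by blast
  ultimately show ?thesis by linarith
qed

lemma lp_ok_Greatest: "s \<in> V \<Longrightarrow> lp_ok V r par c1 R s (GREATEST i. lp_ok V r par c1 R s i)"
  by (rule GreatestI_nat[of _ 0 "Max (depth r par ` V)"]) (auto simp: lp_ok_def lp_ok_bounded)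

lemma lastl_in: "s \<in> R \<Longrightarrow> R \<subseteq> V \<Longrightarrow> lastl V r par c1 R s \<in> R"
  unfolding lastl_def using lp_ok_Greatest funpow_c1_in by blast

lemma lastl_eqI:
  assumes "lp_ok V r par c1 R s i" "\<not> lp_ok V r par c1 R s (Suc i)"
  shows "lastl V r par c1 R s = (c1 ^^ i) s"
proof -
  have "(GREATEST i. lp_ok V r par c1 R s i) = i"
  proof (rule Greatest_equality)
    fix h assume "lp_ok V r par c1 R s h"
    then show "h \<le> i" using assms(2) lp_ok_mono[of R s h "Suc i"] by (cases "h \<le> i") auto
  qed (rule assms(1))
  then show ?thesis unfolding lastl_def by simp
qed

lemma lastl_eq_leftmost_exit:
  assumes S: "is_subtree V par S" and "s \<in> V" and lp: "lp_ok V r par c1 R s (Suc i)"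
    and "(c1 ^^ i) s \<in> S" "(c1 ^^ Suc i) s \<notin> S" and "anc par s (rt par S)"
  shows "lastl V r par c1 S (rt par S) = (c1 ^^ i) s"
proof -
  let ?t = "rt par S"
  have lpi: "lp_ok V r par c1 R s i" using lp_ok_mono[OF lp] by simp
  obtain j where j: "j \<le> i" "?t = (c1 ^^ j) s"
    using anc_on_leftmost_path[OF lpi \<open>s \<in> V\<close> assms(6) rt_anc[OF S assms(4)]] .
  have shift: "(c1 ^^ m) ?t = (c1 ^^ (m + j)) s" for m
    using j(2) by (simp add: funpow_add)
  have "lp_ok V r par c1 S ?t (i - j)"
    unfolding lp_ok_def
  proof (intro allI impI conjI)
    fix m assume "m < i - j"
    then show "children V r par ((c1 ^^ m) ?t) \<noteq> {}"
      using lp shift unfolding lp_ok_def by simp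
    have "Suc m + j \<le> i" using \<open>m < i - j\<close> by simp
    have "anc par ?t ((c1 ^^ (Suc m + j)) s)"
      using anc_funpow_c1[OF lp_ok_mono[OF lpi \<open>Suc m + j \<le> i\<close>] \<open>s \<in> V\<close>, of j] j(2) by simp
    moreover have "anc par ((c1 ^^ (Suc m + j)) s) ((c1 ^^ i) s)"
      using anc_funpow_c1[OF lpi \<open>s \<in> V\<close> \<open>Suc m + j \<le> i\<close>] .
    ultimately have "anc par ?t ((c1 ^^ Suc m) ?t)" and "anc par ((c1 ^^ Suc m) ?t) ((c1 ^^ i) s)"
      using shift[of "Suc m"] by simp_all
    then show "(c1 ^^ Suc m) ?t \<in> S"
      using subtree_convex[OF S rt_in_subtree[OF S] assms(4)] by blast
  qed
  moreover have "\<not> lp_ok V r par c1 S ?t (Suc (i - j))"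
    using assms(5) shift[of "Suc (i - j)"] j(1) lp_ok_Suc by (simp add: Suc_diff_le)
  ultimately show ?thesis using lastl_eqI shift[of "i - j"] j(1) by simp
qed

section \<open>The vertex set \<open>C_R\<close>\<close>

lemma (in rooted_tree) rt_in_CR: "is_subtree V par R \<Longrightarrow> rt par R \<in> CR V r par c1 k R"
  unfolding CR_def using rt_in_subtree by auto

lemma bd_SomeD:
  assumes "bd V r par c1 R d s = Some b"
  obtains i where "lp_ok V r par c1 R s i" "b = (c1 ^^ i) s"
proof -
  let ?Q = "\<lambda>i. lp_ok V r par c1 R s i \<and> balanced V r par c1 R d ((c1 ^^ i) s)"
  have "\<exists>i. ?Q i" using assms unfolding bd_def by (auto split: if_splits)
  then have "?Q (LEAST i. ?Q i)" by (rule LeastI_ex)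
  moreover have "b = (c1 ^^ (LEAST i. ?Q i)) s"
    using assms \<open>\<exists>i. ?Q i\<close> unfolding bd_def by auto
  ultimately show ?thesis using that by blast
qed

lemma CVm_in: "CVm V r par c1 R d x \<Longrightarrow> is_subtree V par R \<Longrightarrow> x \<in> R"
proof (induction rule: CVm.induct)
  case (here R d b)
  then show ?case using funpow_c1_in rt_in_subtree by (metis bd_SomeD)
next
  case (below R d b w x)
  then show ?case using subtree_subR unfolding subR_def by blast
qed

lemma CR_subset: "is_subtree V par R \<Longrightarrow> CR V r par c1 k R \<subseteq> R"
  unfolding CR_def CV_def
  using CVm_in lastl_in rt_in_subtree subtree_subset_V by auto

lemma lastl_in_CR: "is_subtree V par R \<Longrightarrow> lastl V r par c1 R (rt par R) \<in> CR V r par c1 k R"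
  unfolding CR_def using lastl_in rt_in_subtree subtree_subset_V by auto

lemma CR_eq_if_proper:
  "CR V r par c1 k R \<noteq> R \<Longrightarrow>
     CR V r par c1 k R = CV V r par c1 R (real (card R) / real k) \<union> {lastl V r par c1 R (rt par R), rt par R}"
  unfolding CR_def by (auto split: if_splits)

text \<open>A vertex of \<open>CV(R,d)\<close> whose parent is not in \<open>CV(R,d)\<close> is \<open>b\<^sub>d(rt R')\<close> for \<open>R' = R\<close>
  or for some \<open>R' = R\<^sub>w\<close> with \<open>par w \<in> CV(R,d)\<close>, so it lies on a leftmost path from \<open>rt R'\<close>.\<close>

lemma CVm_entry:
  "CVm V r par c1 R d w \<Longrightarrow> is_subtree V par R \<Longrightarrow> x \<in> R \<Longrightarrow> w \<in> children V r par x \<Longrightarrow>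
   \<not> CVm V r par c1 R d x \<Longrightarrow>
   \<exists>s i. s \<in> R \<and> lp_ok V r par c1 R s (Suc i) \<and> (c1 ^^ i) s = x \<and> (c1 ^^ Suc i) s = w
     \<and> (s = rt par R \<or> CVm V r par c1 R d (par s))"
proof (induction arbitrary: x rule: CVm.induct)
  case (here R d b)
  obtain i where i: "lp_ok V r par c1 R (rt par R) i" "b = (c1 ^^ i) (rt par R)"
    using bd_SomeD[OF here(1)] .
  have "b \<noteq> rt par R" using child_not_anc[OF here(4)] rt_anc[OF here(2,3)] by blast
  then obtain i' where i': "i = Suc i'" using i(2) by (cases i) auto
  have "(c1 ^^ i') (rt par R) = x"
    using par_funpow_c1 i i' childrenD[OF here(4)] rt_in_subtree[OF here(2)] subtree_subset_V[OF here(2)]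
    by auto
  then show ?case using i i' rt_in_subtree[OF here(2)] by blast
next
  case (below R d b w' w)
  let ?R' = "subR par R w'"
  have R': "is_subtree V par ?R'" using subtree_subR[OF below(6) below(3)] .
  have "CVm V r par c1 R d b" using CVm.here[OF below(1)] .
  have "w \<in> ?R'" using CVm_in[OF below(4) R'] .
  show ?case
  proof (cases "x \<in> ?R'")
    case True
    have "\<not> CVm V r par c1 ?R' d x" using CVm.below[OF below(1-3)] below(9) by blast
    then obtain s i where si: "s \<in> ?R'" "lp_ok V r par c1 ?R' s (Suc i)" "(c1 ^^ i) s = x"
      "(c1 ^^ Suc i) s = w" "s = rt par ?R' \<or> CVm V r par c1 ?R' d (par s)"
      using below.IH[OF R' True below(8)] by blast
    have "?R' \<subseteq> R" unfolding subR_def by blast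
    moreover have "CVm V r par c1 R d (par s)"
    proof (cases "s = rt par ?R'")
      case True
      then have "par s = b"
        using rt_subR[OF subtree_subset_V[OF below(6)] below(3)] childrenD[OF below(2)] by simp
      then show ?thesis using \<open>CVm V r par c1 R d b\<close> by simp
    next
      case False
      then show ?thesis using si(5) CVm.below[OF below(1-3)] by blast
    qed
    ultimately show ?thesis using si(1-4) lp_ok_subset[OF si(2)] by blast
  next
    case False
    have "w' = w"
      using anc_cases[of w' w] \<open>w \<in> ?R'\<close> False childrenD[OF below(8)] below(7)
      unfolding subR_def by auto
    then have "x = b" using childrenD[OF below(8)] childrenD[OF below(2)] by simp
    then show ?thesis using \<open>CVm V r par c1 R d b\<close> below(9) by blast
  qed
qed

lemma CR_entry:
  assumes R: "is_subtree V par R" and x: "x \<in> R" "x \<notin> CR V r par c1 k R"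
    and w: "w \<in> children V r par x" "w \<in> CR V r par c1 k R"
  obtains s i where "s \<in> R" "lp_ok V r par c1 R s (Suc i)" "(c1 ^^ i) s = x" "(c1 ^^ Suc i) s = w"
    "s = rt par R \<or> par s \<in> CR V r par c1 k R"
proof -
  let ?d = "real (card R) / real k" and ?t = "rt par R"
  have proper: "CR V r par c1 k R = CV V r par c1 R ?d \<union> {lastl V r par c1 R ?t, ?t}"
    using x CR_eq_if_proper by blast
  have "w \<noteq> ?t" using child_not_anc[OF w(1)] rt_anc[OF R x(1)] by blast
  with w(2) proper consider (CV) "CVm V r par c1 R ?d w" | (lastl) "w = lastl V r par c1 R ?t"
    unfolding CV_def by blast
  then show ?thesis
  proof cases
    case CV
    moreover have "\<not> CVm V r par c1 R ?d x" using x(2) proper unfolding CV_def by blast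
    ultimately show ?thesis
      using CVm_entry[OF _ R x(1) w(1)] that proper unfolding CV_def by blast
  next
    case lastl
    let ?G = "GREATEST i. lp_ok V r par c1 R ?t i"
    have tV: "?t \<in> V" using rt_in_subtree[OF R] subtree_subset_V[OF R] by blast
    have lp: "lp_ok V r par c1 R ?t ?G" using lp_ok_Greatest[OF tV] .
    have wG: "w = (c1 ^^ ?G) ?t" using lastl unfolding lastl_def by simp
    then obtain i where i: "?G = Suc i" using \<open>w \<noteq> ?t\<close> by (cases ?G) auto
    have "(c1 ^^ i) ?t = x" using par_funpow_c1[OF lp[unfolded i] tV] wG i childrenD[OF w(1)] by simp
    then show ?thesis using that lp i wG rt_in_subtree[OF R] by simp
  qed
qed

end

section \<open>Canonical subtrees\<close>

locale canonical_decomposition = leftmost_tree +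
  fixes k :: nat
begin

abbreviation pruned :: "'a set \<Rightarrow> 'a set" where
  "pruned R \<equiv> R - CR V r par c1 k R"

lemma canonical_subtree: "canonical V r par c1 k R \<Longrightarrow> is_subtree V par R"
  by (induction rule: canonical.induct) (auto intro: subtree_V component_subtree)

lemma canonical_top_or_pruned: "canonical V r par c1 k R \<Longrightarrow> R = V \<or> R \<subseteq> pruned V"
proof (induction rule: canonical.induct)
  case (step R S)
  then show ?case using component_subset[OF step.hyps(2)] by blast
qed simp

definition nested :: "'a set \<Rightarrow> 'a set \<Rightarrow> bool" where
  "nested R1 R2 \<longleftrightarrow> R1 \<inter> R2 = {} \<or> R1 = R2 \<or> R1 \<subseteq> pruned R2 \<or> R2 \<subseteq> pruned R1"

lemma nested_sym: "nested R1 R2 \<Longrightarrow> nested R2 R1"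
  unfolding nested_def by blast

lemma nested_component: "nested R1 P \<Longrightarrow> component V par (pruned P) R \<Longrightarrow> nested R1 R \<or> R1 \<subseteq> pruned P"
  using component_subset unfolding nested_def by blast

lemma nested_top: "canonical V r par c1 k R \<Longrightarrow> nested V R"
  using canonical_top_or_pruned unfolding nested_def by blast

lemma component_of_pruned_absurd:
  assumes "is_subtree V par P" "P \<subseteq> pruned Q" "component V par (pruned Q) R" "R \<subseteq> pruned P"
  shows False
proof -
  have "P = R" using component_maximal[OF assms(3,1)] assms(2,4) by blast
  then show False using assms(1,4) rt_in_subtree rt_in_CR by blast
qed

lemma canonical_nested:
  "canonical V r par c1 k R1 \<Longrightarrow> canonical V r par c1 k R2 \<Longrightarrow> nested R1 R2"
proof (induction R1 arbitrary: R2 rule: canonical.induct)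
  case top
  then show ?case by (rule nested_top)
next
  case (step P1 R1)
  note P1 = step.hyps and IH1 = step.IH
  have R1: "canonical V r par c1 k R1" using canonical.step[OF P1] .
  from step.prems show ?case
  proof (induction R2 rule: canonical.induct)
    case top
    then show ?case using nested_sym nested_top[OF R1] by blast
  next
    case (step P2 R2)
    have R2: "canonical V r par c1 k R2" using canonical.step[OF step.hyps] .
    show ?case
    proof (rule ccontr)
      assume not_nested: "\<not> nested R1 R2"
      then have in_P2: "R1 \<subseteq> pruned P2"
        using nested_component[OF step.IH step.hyps(2)] by blast
      have in_P1: "R2 \<subseteq> pruned P1"
        using nested_component[OF nested_sym[OF IH1[OF R2]] P1(2)] not_nested nested_sym by blast
      from IH1[OF step.hyps(1)] consider "P1 \<inter> P2 = {}" | "P1 = P2" | "P1 \<subseteq> pruned P2" | "P2 \<subseteq> pruned P1"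
        unfolding nested_def by blast
      then show False
      proof cases
        case 1
        then show False
          using rt_in_subtree[OF canonical_subtree[OF R1]] component_subset[OF P1(2)] in_P2 by blast
      next
        case 2
        have "R1 = R2" if "z \<in> R1" "z \<in> R2" for z
          using component_unique[OF P1(2) step.hyps(2)[folded 2] that] .
        then show False using not_nested unfolding nested_def by blast
      next
        case 3
        show False using component_of_pruned_absurd[OF canonical_subtree[OF P1(1)] 3 step.hyps(2) in_P1] .
      next
        case 4
        show False using component_of_pruned_absurd[OF canonical_subtree[OF step.hyps(1)] 4 P1(2) in_P2] .
      qed
    qed
  qed
qed

lemma canonical_with_CR_exists:
  "canonical V r par c1 k R \<Longrightarrow> u \<in> R \<Longrightarrow> \<exists>R'. canonical V r par c1 k R' \<and> u \<in> CR V r par c1 k R'"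
proof (induction "card R" arbitrary: R rule: less_induct)
  case less
  show ?case
  proof (cases "u \<in> CR V r par c1 k R")
    case False
    have R: "is_subtree V par R" using canonical_subtree[OF less.prems(1)] .
    obtain S where S: "component V par (pruned R) S" "u \<in> S"
      using component_exists[of u "pruned R"] False less.prems(2) subtree_subset_V[OF R] by blast
    have "S \<subset> R"
      using component_subset[OF S(1)] rt_in_subtree[OF R] rt_in_CR[OF R] by blast
    then have "card S < card R"
      using psubset_card_mono finite_subset[OF subtree_subset_V[OF R] finite_V] by blast
    then show ?thesis using less.hyps canonical.step[OF less.prems(1) S(1)] S(2) by blast
  qed (use less.prems in blast)
qed

lemma Tcan_canonical:
  assumes "u \<in> V"
  shows "canonical V r par c1 k (Tcan V r par c1 k u)" and "u \<in> CR V r par c1 k (Tcan V r par c1 k u)"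
proof -
  obtain R where R: "canonical V r par c1 k R" "u \<in> CR V r par c1 k R"
    using canonical_with_CR_exists[OF canonical.top assms] by blast
  have unique: "R' = R" if R': "canonical V r par c1 k R'" "u \<in> CR V r par c1 k R'" for R'
  proof -
    have "u \<in> R'" using CR_subset[OF canonical_subtree[OF R'(1)]] R'(2) by blast
    moreover have "u \<in> R" using CR_subset[OF canonical_subtree[OF R(1)]] R(2) by blast
    ultimately show ?thesis using canonical_nested[OF R'(1) R(1)] R(2) R'(2) unfolding nested_def by blast
  qed
  have "Tcan V r par c1 k u = R" unfolding Tcan_def by (rule the_equality) (use R unique in blast)+
  then show "canonical V r par c1 k (Tcan V r par c1 k u)" "u \<in> CR V r par c1 k (Tcan V r par c1 k u)"
    using R by simp_all
qed

lemma canonical_exit_eq_lastl: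
  "canonical V r par c1 k R \<Longrightarrow> x \<in> R \<Longrightarrow> w \<in> children V r par x \<Longrightarrow> w \<notin> R \<Longrightarrow>
   x = lastl V r par c1 R (rt par R)"
proof (induction arbitrary: x w rule: canonical.induct)
  case top
  then show ?case using childrenD by blast
next
  case (step R S)
  have R: "is_subtree V par R" using canonical_subtree[OF step.hyps(1)] .
  have S: "is_subtree V par S" and SA: "S \<subseteq> pruned R"
    using component_subtree[OF step.hyps(2)] component_subset[OF step.hyps(2)] .
  have x: "x \<in> R" "x \<notin> CR V r par c1 k R" using SA step.prems(1) by auto
  consider (outside) "w \<notin> R" | (inside) "w \<in> pruned R" | (CR) "w \<in> CR V r par c1 k R" by blast
  then show ?case
  proof cases
    case outside
    then show ?thesis using step.IH[OF x(1) step.prems(2)] lastl_in_CR[OF R] x(2) by simp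
  next
    case inside
    then have "insert w S = S"
      using component_maximal[OF step.hyps(2) subtree_insert_child[OF S step.prems(1,2)]] SA by blast
    then show ?thesis using step.prems(3) by blast
  next
    case CR
    obtain s i where si: "s \<in> R" "lp_ok V r par c1 R s (Suc i)" "(c1 ^^ i) s = x"
      "(c1 ^^ Suc i) s = w" "s = rt par R \<or> par s \<in> CR V r par c1 k R"
      using CR_entry[OF R x step.prems(2) CR] .
    have sV: "s \<in> V" using si(1) subtree_subset_V[OF R] by blast
    have sx: "anc par s x"
      using anc_funpow_c1[OF lp_ok_mono[OF si(2)] sV, of i 0] si(3) by simp
    have "anc par s (rt par S)"
    proof (cases "anc par (rt par S) s \<and> rt par S \<noteq> s")
      case True
      then have "anc par (rt par S) (par s)" using anc_cases by blast
      moreover have "anc par (par s) x" using anc_trans[OF anc_par sx] .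
      ultimately have "par s \<in> S" using subtree_convex[OF S rt_in_subtree[OF S] step.prems(1)] by blast
      then have "s = rt par R" using si(5) SA by blast
      then show ?thesis using rt_anc[OF R] rt_in_subtree[OF S] SA by blast
    next
      case False
      then show ?thesis using anc_linear[OF sx rt_anc[OF S step.prems(1)]] anc_refl by blast
    qed
    then show ?thesis
      using lastl_eq_leftmost_exit[OF S sV si(2)] si(3,4) step.prems(1,3) by simp
  qed
qed

end

theorem lemma5:
  fixes V :: "'a set" and r :: 'a and par c1 :: "'a \<Rightarrow> 'a"
    and wt :: "'a \<Rightarrow> real" and k :: nat and u v :: 'a
  assumes tree: "is_rtree V r par"
    and weights: "\<forall>w\<in>V - {r}. wt w > 0"
    and lm: "leftmost_choice V r par c1"
    and k4: "k \<ge> 4"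
    and uV: "u \<in> V" and vV: "v \<in> V"
    and v_notin: "v \<notin> Tcan V r par c1 k u"
    and Xne: "{y \<in> CR V r par c1 k (Tcan V r par c1 k u). anc par y v} \<noteq> {}"
  shows "last (filter (\<lambda>w. w \<in> Tcan V r par c1 k u) (tpath r par u v))
           \<in> {y \<in> CR V r par c1 k (Tcan V r par c1 k u). anc par y v}
       \<and> (\<forall>y \<in> {y \<in> CR V r par c1 k (Tcan V r par c1 k u). anc par y v}.
           depth r par y \<le> depth r par (last (filter (\<lambda>w. w \<in> Tcan V r par c1 k u) (tpath r par u v))))"
proof -
  interpret canonical_decomposition V r par c1 k
    using tree lm by unfold_locales
  define R where "R = Tcan V r par c1 k u"
  have R: "is_subtree V par R" and "u \<in> CR V r par c1 k R"
    using canonical_subtree Tcan_canonical[OF uV] unfolding R_def by blast+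
  then have "u \<in> R" using CR_subset by blast
  obtain y where y: "y \<in> R" "anc par y v" using Xne CR_subset[OF R] unfolding R_def by blast
  let ?x = "lowest_anc_in par R v"
  obtain w where "w \<in> children V r par ?x" "w \<notin> R"
    using lowest_anc_in_exit[OF vV v_notin[folded R_def] y] .
  then have "?x = lastl V r par c1 R (rt par R)"
    using canonical_exit_eq_lastl Tcan_canonical(1)[OF uV] lowest_anc_in_mem[OF y]
    unfolding R_def by blast
  then have "?x \<in> CR V r par c1 k R" using lastl_in_CR[OF R] by simp
  moreover have "depth r par y' \<le> depth r par ?x" if "y' \<in> CR V r par c1 k R" "anc par y' v" for y'
    using anc_depth_le[OF anc_lowest_anc_inI[OF _ that(2)] anc_in_V[OF anc_lowest_anc_in vV]]
      CR_subset[OF R] that(1) by blast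
  moreover have "last (filter (\<lambda>w. w \<in> R) (tpath r par u v)) = ?x"
    using last_filter_tpath[OF R \<open>u \<in> R\<close> vV y] .
  ultimately show ?thesis using anc_lowest_anc_in unfolding R_def by auto
qed

end
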